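(* For $i=1,\cdots,r$ let $\Theta_i\in H^\infty_{M_{n\times m_i}}$ be matrix inner functions, and let $\Theta\in H^\infty_{M_{n\times l}}$ be a greatest common divisor of $\{\Theta_1,\cdots,\Theta_r\}$, i.e. a matrix inner function with $\bigvee_{i=1}^r\Theta_iH^2_{\mathbb C^{m_i}}=\Theta H^2_{\mathbb C^l}$ (closed linear span). Then $\max\{m_1,\cdots,m_r\}\le l\le\sum_{i=1}^rm_i$.
   Context: A matrix function $\Theta\in H^\infty_{M_{n\times m}}$ is inner if $\Theta(\zeta)^*\Theta(\zeta)=I$ for a.e. $\zeta$ on the unit circle; $H^2_{\mathbb C^m}$ is the space of column vectors of $m$ functions in the Hardy space $H^2$. *)

theory Defs
  imports "HOL-Analysis.Analysis"
begin

(* The unit circle is parametrised by t in [0, 2*pi] (zeta = exp(i t)) with Lebesgue measure.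
   Vector-valued functions are  nat => real => complex  (component index first);
   a vector in C^n uses components i < n and is zero in components i >= n.
   Matrix functions are  nat => nat => real => complex  (row, column), entries used for i<n, j<m. *)

definition is_L2 :: "(real \<Rightarrow> complex) \<Rightarrow> bool" where
  "is_L2 f \<longleftrightarrow> f \<in> borel_measurable lborel \<and>
     set_integrable lborel {0..2*pi} (\<lambda>t. (cmod (f t))^2)"

text \<open>Scalar Hardy space H^2: L^2 functions on the circle whose Fourier coefficients
  of negative index vanish.\<close>
definition is_H2 :: "(real \<Rightarrow> complex) \<Rightarrow> bool" where
  "is_H2 f \<longleftrightarrow> is_L2 f \<and>
     (\<forall>k::nat. k > 0 \<longrightarrow>
        (LINT t:{0..2*pi}|lborel. f t * exp (\<i> * of_nat k * of_real t)) = 0)"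

definition is_Hinf :: "(real \<Rightarrow> complex) \<Rightarrow> bool" where
  "is_Hinf f \<longleftrightarrow> is_H2 f \<and>
     (\<exists>B. AE t in lborel. t \<in> {0..2*pi} \<longrightarrow> cmod (f t) \<le> B)"

definition is_inner :: "nat \<Rightarrow> nat \<Rightarrow> (nat \<Rightarrow> nat \<Rightarrow> real \<Rightarrow> complex) \<Rightarrow> bool" where
  "is_inner n m \<Theta> \<longleftrightarrow> (\<forall>i<n. \<forall>j<m. is_Hinf (\<Theta> i j)) \<and>
     (AE t in lborel. t \<in> {0..2*pi} \<longrightarrow>
        (\<forall>j<m. \<forall>k<m. (\<Sum>i<n. cnj (\<Theta> i j t) * \<Theta> i k t) = (if j = k then 1 else 0)))"

definition vec_L2 :: "nat \<Rightarrow> (nat \<Rightarrow> real \<Rightarrow> complex) \<Rightarrow> bool" where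
  "vec_L2 n f \<longleftrightarrow> (\<forall>i<n. is_L2 (f i)) \<and> (\<forall>i\<ge>n. f i = (\<lambda>_. 0))"

definition vec_H2 :: "nat \<Rightarrow> (nat \<Rightarrow> real \<Rightarrow> complex) \<Rightarrow> bool" where
  "vec_H2 m f \<longleftrightarrow> (\<forall>j<m. is_H2 (f j)) \<and> (\<forall>j\<ge>m. f j = (\<lambda>_. 0))"

definition mat_apply :: "nat \<Rightarrow> nat \<Rightarrow> (nat \<Rightarrow> nat \<Rightarrow> real \<Rightarrow> complex) \<Rightarrow>
    (nat \<Rightarrow> real \<Rightarrow> complex) \<Rightarrow> (nat \<Rightarrow> real \<Rightarrow> complex)" where
  "mat_apply n m \<Theta> f = (\<lambda>i t. if i < n then (\<Sum>j<m. \<Theta> i j t * f j t) else 0)"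

definition l2dist :: "nat \<Rightarrow> (nat \<Rightarrow> real \<Rightarrow> complex) \<Rightarrow> (nat \<Rightarrow> real \<Rightarrow> complex) \<Rightarrow> real" where
  "l2dist n g h = sqrt (\<Sum>i<n. LINT t:{0..2*pi}|lborel. (cmod (g i t - h i t))^2)"

text \<open>Theta H^2_{C^m}, as a subset of L^2_{C^n} (functions identified a.e.).\<close>
definition range_mult :: "nat \<Rightarrow> nat \<Rightarrow> (nat \<Rightarrow> nat \<Rightarrow> real \<Rightarrow> complex) \<Rightarrow>
    (nat \<Rightarrow> real \<Rightarrow> complex) set" where
  "range_mult n m \<Theta> = {g. vec_L2 n g \<and> (\<exists>f. vec_H2 m f \<and> l2dist n g (mat_apply n m \<Theta> f) = 0)}"

definition lin_span :: "(nat \<Rightarrow> real \<Rightarrow> complex) set \<Rightarrow> (nat \<Rightarrow> real \<Rightarrow> complex) set" where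
  "lin_span S = {g. \<exists>N (c :: nat \<Rightarrow> complex) v. (\<forall>k<N. v k \<in> S) \<and>
                     g = (\<lambda>i t. \<Sum>k<N. c k * v k i t)}"

definition l2_closure :: "nat \<Rightarrow> (nat \<Rightarrow> real \<Rightarrow> complex) set \<Rightarrow> (nat \<Rightarrow> real \<Rightarrow> complex) set" where
  "l2_closure n S = {g. vec_L2 n g \<and> (\<forall>\<epsilon>>0. \<exists>h\<in>S. l2dist n g h < \<epsilon>)}"

end

theory Submission
  imports Defs "HOL-Library.Function_Algebras"
begin

(* Both bounds are pointwise dimension counts. For almost every t the columns of an inner
   function form an orthonormal family in C^n, and every function in Theta_i H^2 takes its value
   at t in the span of the columns of Theta_i(t). The columns of Theta_i lie in Theta H^2, so the
   m_i orthonormal columns of Theta_i(t) lie in the span of the l columns of Theta(t): m_i <= l.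
   Conversely, every column of Theta is an L^2-limit of finite combinations of functions in the
   spaces Theta_i H^2. Approximating all l columns and averaging the squared error over the
   circle yields a point t at which the columns of Theta(t) are orthonormal and each is uniformly
   close to a vector in the span of the sum of m_i columns of the Theta_i(t). Vectors that close
   to an orthonormal family are linearly independent, hence l <= sum of the m_i. *)

section \<open>Nearly orthonormal families of vectors\<close>

definition scale_vec :: "complex \<Rightarrow> ('a \<Rightarrow> complex) \<Rightarrow> 'a \<Rightarrow> complex" where
  "scale_vec c v = (\<lambda>i. c * v i)"

interpretation cvec: vector_space scale_vec
  by unfold_locales (auto simp: scale_vec_def fun_eq_iff algebra_simps)

lemma sum_scale_vec_apply: "(\<Sum>x\<in>A. scale_vec (c x) (v x)) i = (\<Sum>x\<in>A. c x * v x i)"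
  by (induction A rule: infinite_finite_induct) (auto simp: scale_vec_def)

definition orthonormal_family :: "nat \<Rightarrow> nat \<Rightarrow> (nat \<Rightarrow> nat \<Rightarrow> complex) \<Rightarrow> bool" where
  "orthonormal_family n m u \<longleftrightarrow>
     (\<forall>j<m. \<forall>k<m. (\<Sum>i<n. cnj (u j i) * u k i) = (if j = k then 1 else 0))"

lemma unit_vector_norm_le_1:
  fixes u :: "nat \<Rightarrow> complex"
  assumes unit: "(\<Sum>i<n. cnj (u i) * u i) = 1" and "i < n"
  shows "cmod (u i) \<le> 1"
proof -
  have "(\<Sum>i<n. cnj (u i) * u i) = of_real (\<Sum>i<n. (cmod (u i))\<^sup>2)"
    unfolding of_real_sum by (intro sum.cong refl) (metis complex_norm_square mult.commute)
  with unit have "(\<Sum>i<n. (cmod (u i))\<^sup>2) = 1"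
    by (metis of_real_eq_1_iff)
  moreover have "(cmod (u i))\<^sup>2 \<le> (\<Sum>i<n. (cmod (u i))\<^sup>2)"
    using \<open>i < n\<close> by (intro member_le_sum) auto
  ultimately show ?thesis
    by (simp add: power_le_one_iff)
qed

lemma unit_vector_inner_le:
  fixes u w :: "nat \<Rightarrow> complex"
  assumes unit: "(\<Sum>i<n. cnj (u i) * u i) = 1"
    and small: "\<forall>i<n. cmod (w i) \<le> \<eta>"
  shows "cmod (\<Sum>i<n. cnj (u i) * w i) \<le> real n * \<eta>"
proof -
  have "cmod (\<Sum>i<n. cnj (u i) * w i) \<le> (\<Sum>i<n. cmod (u i) * cmod (w i))"
    by (metis (no_types, lifting) complex_mod_cnj norm_mult norm_sum sum.cong)
  also have "\<dots> \<le> (\<Sum>i<n. \<eta>)"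
  proof (rule sum_mono)
    fix i assume "i \<in> {..<n}"
    then have "cmod (u i) \<le> 1" "cmod (w i) \<le> \<eta>"
      using unit_vector_norm_le_1[OF unit] small by auto
    then show "cmod (u i) * cmod (w i) \<le> \<eta>"
      by (metis mult_left_le_one_le norm_ge_zero order_trans)
  qed
  finally show ?thesis
    by simp
qed

lemma near_orthonormal_scalars_zero:
  fixes u h :: "nat \<Rightarrow> nat \<Rightarrow> complex" and c :: "nat \<Rightarrow> complex"
  assumes orth: "orthonormal_family n l u"
    and close: "\<forall>k<l. \<forall>i<n. cmod (u k i - h k i) \<le> \<eta>"
    and small: "real l * real n * \<eta> < 1"
    and comb: "\<forall>i<n. (\<Sum>k<l. c k * h k i) = 0"
  shows "\<forall>k<l. c k = 0"
proof -
  define e where "e j k = (\<Sum>i<n. cnj (u j i) * (u k i - h k i))" for j k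
  have e_bound: "cmod (e j k) \<le> real n * \<eta>" if "j < l" "k < l" for j k
    unfolding e_def using orth close that
    by (intro unit_vector_inner_le) (auto simp: orthonormal_family_def)
  \<comment> \<open>Pairing the vanishing combination with \<open>u j\<close>; as \<open>e\<close> is small, the l1-norm \<open>C\<close> of \<open>c\<close>
    satisfies \<open>C \<le> l n \<eta> C\<close>.\<close>
  have c_eq: "c j = (\<Sum>k<l. c k * e j k)" if "j < l" for j
  proof -
    have "0 = (\<Sum>i<n. cnj (u j i) * (\<Sum>k<l. c k * h k i))"
      using comb by simp
    also have "\<dots> = (\<Sum>k<l. c k * (\<Sum>i<n. cnj (u j i) * h k i))"
      by (simp add: sum_distrib_left algebra_simps sum.swap[of _ "{..<n}"])
    also have "\<dots> = (\<Sum>k<l. c k * ((if j = k then 1 else 0) - e j k))"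
      using orth that
      by (intro sum.cong) (auto simp: orthonormal_family_def e_def algebra_simps sum_subtractf)
    also have "\<dots> = (\<Sum>k<l. (if j = k then c k else 0) - c k * e j k)"
      by (intro sum.cong) (auto simp: algebra_simps)
    also have "\<dots> = c j - (\<Sum>k<l. c k * e j k)"
      using that by (simp add: sum_subtractf)
    finally show ?thesis by simp
  qed
  define C where "C = (\<Sum>k<l. cmod (c k))"
  have "C \<le> (\<Sum>j<l. real n * \<eta> * C)"
    unfolding C_def
  proof (rule sum_mono)
    fix j assume j: "j \<in> {..<l}"
    have "cmod (c j) \<le> (\<Sum>k<l. cmod (c k * e j k))"
      using c_eq[of j] j by (metis lessThan_iff norm_sum)
    also have "\<dots> \<le> (\<Sum>k<l. cmod (c k) * (real n * \<eta>))"
      using e_bound j by (intro sum_mono) (simp add: norm_mult mult_left_mono)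
    finally show "cmod (c j) \<le> real n * \<eta> * (\<Sum>k<l. cmod (c k))"
      by (simp add: sum_distrib_left mult_ac)
  qed
  then have "(1 - real l * real n * \<eta>) * C \<le> 0"
    by (simp add: algebra_simps)
  with small have "C = 0"
    unfolding C_def by (simp add: mult_le_0_iff sum_nonneg order_antisym)
  then show ?thesis
    unfolding C_def by (simp add: sum_nonneg_eq_0_iff)
qed

lemma near_orthonormal_card_le:
  fixes u h :: "nat \<Rightarrow> nat \<Rightarrow> complex"
  assumes orth: "orthonormal_family n l u"
    and close: "\<forall>k<l. \<forall>i<n. cmod (u k i - h k i) \<le> \<eta>"
    and small: "real l * real n * \<eta> < 1"
    and span: "\<forall>k<l. h k \<in> cvec.span B" and "finite B"
  shows "l \<le> card B"
proof -
  have scalars_zero: "\<forall>k<l. c k = 0" if "(\<Sum>k<l. scale_vec (c k) (h k)) = 0" for c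
    using near_orthonormal_scalars_zero[OF orth close small] that
    by (metis sum_scale_vec_apply zero_fun_def)
  have inj: "inj_on h {..<l}"
  proof (rule inj_onI, rule ccontr)
    fix a b assume ab: "a \<in> {..<l}" "b \<in> {..<l}" "h a = h b" "a \<noteq> b"
    define c where "c k = (if k = a then 1 else if k = b then -1 else (0::complex))" for k
    have "(\<Sum>k<l. scale_vec (c k) (h k)) = (\<Sum>k\<in>{a,b}. scale_vec (c k) (h k))"
      using ab by (intro sum.mono_neutral_right) (auto simp: c_def scale_vec_def fun_eq_iff)
    also have "\<dots> = 0"
      using ab by (simp add: c_def scale_vec_def fun_eq_iff)
    finally have "c a = 0"
      using scalars_zero ab by blast
    then show False
      by (simp add: c_def)
  qed
  have "cvec.independent (h ` {..<l})"
  proof (rule cvec.independent_if_scalars_zero)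
    fix f x assume "(\<Sum>x\<in>h ` {..<l}. scale_vec (f x) x) = 0" and "x \<in> h ` {..<l}"
    then show "f x = 0"
      using scalars_zero[of "f \<circ> h"] by (auto simp: sum.reindex[OF inj])
  qed auto
  then have "card (h ` {..<l}) \<le> card B"
    using cvec.independent_span_bound \<open>finite B\<close> span by blast
  then show ?thesis
    by (simp add: card_image[OF inj])
qed

section \<open>Square-integrable functions on the circle\<close>

abbreviation circle :: "real set" where
  "circle \<equiv> {0..2*pi}"

lemma set_integrable_sum:
  fixes f :: "'i \<Rightarrow> 'a \<Rightarrow> 'b::{banach, second_countable_topology}"
  assumes "\<And>k. k \<in> K \<Longrightarrow> set_integrable M A (f k)"
  shows "set_integrable M A (\<lambda>x. \<Sum>k\<in>K. f k x)"
  unfolding set_integrable_def scaleR_sum_right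
  by (intro Bochner_Integration.integrable_sum)
    (use assms in \<open>simp add: set_integrable_def\<close>)

lemma set_integral_sum:
  fixes f :: "'i \<Rightarrow> 'a \<Rightarrow> 'b::{banach, second_countable_topology}"
  assumes "\<And>k. k \<in> K \<Longrightarrow> set_integrable M A (f k)"
  shows "(LINT x:A|M. (\<Sum>k\<in>K. f k x)) = (\<Sum>k\<in>K. LINT x:A|M. f k x)"
  unfolding set_lebesgue_integral_def scaleR_sum_right
  by (intro Bochner_Integration.integral_sum)
    (use assms in \<open>simp add: set_integrable_def\<close>)

lemma set_borel_measurable_norm_sq:
  fixes f :: "real \<Rightarrow> complex"
  assumes [measurable]: "f \<in> borel_measurable lborel"
  shows "set_borel_measurable lborel circle (\<lambda>t. (cmod (f t))\<^sup>2)"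
  unfolding set_borel_measurable_def by measurable

lemma is_L2_add:
  assumes "is_L2 f" "is_L2 g"
  shows "is_L2 (\<lambda>t. f t + g t)"
proof -
  have meas: "(\<lambda>t. f t + g t) \<in> borel_measurable lborel"
    using assms by (simp add: is_L2_def borel_measurable_add)
  have "set_integrable lborel circle (\<lambda>t. 2 * (cmod (f t))\<^sup>2 + 2 * (cmod (g t))\<^sup>2)"
    using assms unfolding is_L2_def by (intro set_integral_add) auto
  moreover have "(cmod (f t + g t))\<^sup>2 \<le> 2 * (cmod (f t))\<^sup>2 + 2 * (cmod (g t))\<^sup>2" for t
  proof -
    have "(cmod (f t + g t))\<^sup>2 \<le> (cmod (f t) + cmod (g t))\<^sup>2"
      by (simp add: norm_triangle_ineq power_mono)
    also have "\<dots> \<le> 2 * (cmod (f t))\<^sup>2 + 2 * (cmod (g t))\<^sup>2"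
      using zero_le_power2[of "cmod (f t) - cmod (g t)"] by (simp add: power2_sum power2_diff)
    finally show ?thesis .
  qed
  ultimately have "set_integrable lborel circle (\<lambda>t. (cmod (f t + g t))\<^sup>2)"
    by (intro set_integrable_bound[OF _ set_borel_measurable_norm_sq[OF meas]]) auto
  with meas show ?thesis
    by (simp add: is_L2_def)
qed

lemma is_L2_mult_bounded:
  assumes bounded: "AE t in lborel. t \<in> circle \<longrightarrow> cmod (a t) \<le> B"
    and [measurable]: "a \<in> borel_measurable lborel"
    and "is_L2 f"
  shows "is_L2 (\<lambda>t. a t * f t)"
proof -
  have meas: "(\<lambda>t. a t * f t) \<in> borel_measurable lborel"
    using assms by (simp add: is_L2_def borel_measurable_times)
  have "set_integrable lborel circle (\<lambda>t. B\<^sup>2 * (cmod (f t))\<^sup>2)"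
    using \<open>is_L2 f\<close> by (simp add: is_L2_def)
  moreover have "AE t in lborel. t \<in> circle \<longrightarrow> (cmod (a t * f t))\<^sup>2 \<le> B\<^sup>2 * (cmod (f t))\<^sup>2"
    using bounded by eventually_elim
      (auto simp: norm_mult power_mult_distrib intro!: mult_right_mono power_mono)
  ultimately have "set_integrable lborel circle (\<lambda>t. (cmod (a t * f t))\<^sup>2)"
    by (intro set_integrable_bound[OF _ set_borel_measurable_norm_sq[OF meas]]) auto
  with meas show ?thesis
    by (simp add: is_L2_def)
qed

lemma is_L2_mult_Hinf: "is_Hinf a \<Longrightarrow> is_L2 f \<Longrightarrow> is_L2 (\<lambda>t. a t * f t)"
  unfolding is_Hinf_def is_H2_def is_L2_def[of a] by (metis is_L2_mult_bounded)

lemma is_L2_const: "is_L2 (\<lambda>t. c)"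
  by (simp add: is_L2_def set_integrable_def)

lemma is_L2_sum: "(\<And>k. k \<in> K \<Longrightarrow> is_L2 (f k)) \<Longrightarrow> is_L2 (\<lambda>t. \<Sum>k\<in>K. f k t)"
  by (induction K rule: infinite_finite_induct) (auto intro: is_L2_add is_L2_const)

lemma is_L2_cmult: "is_L2 f \<Longrightarrow> is_L2 (\<lambda>t. c * f t)"
  using is_L2_mult_bounded[of "\<lambda>_. c" "cmod c"] by simp

lemma is_L2_diff:
  assumes "is_L2 f" "is_L2 g"
  shows "is_L2 (\<lambda>t. f t - g t)"
  using is_L2_add[OF assms(1) is_L2_cmult[OF assms(2), of "-1"]] by simp

lemma l2dist_nonneg: "0 \<le> l2dist n g h"
  unfolding l2dist_def set_lebesgue_integral_def
  by (intro real_sqrt_ge_zero sum_nonneg integral_nonneg_AE) auto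

lemma
  assumes "\<forall>i<n. is_L2 (g i)" "\<forall>i<n. is_L2 (h i)"
  shows set_integrable_l2dist_sq:
      "set_integrable lborel circle (\<lambda>t. \<Sum>i<n. (cmod (g i t - h i t))\<^sup>2)"
    and set_integral_l2dist_sq:
      "(LINT t:circle|lborel. \<Sum>i<n. (cmod (g i t - h i t))\<^sup>2) = (l2dist n g h)\<^sup>2"
proof -
  have terms: "set_integrable lborel circle (\<lambda>t. (cmod (g i t - h i t))\<^sup>2)" if "i < n" for i
    using assms that is_L2_diff unfolding is_L2_def by blast
  then show "set_integrable lborel circle (\<lambda>t. \<Sum>i<n. (cmod (g i t - h i t))\<^sup>2)"
    by (intro set_integrable_sum) auto
  have "(LINT t:circle|lborel. \<Sum>i<n. (cmod (g i t - h i t))\<^sup>2) =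
      (\<Sum>i<n. LINT t:circle|lborel. (cmod (g i t - h i t))\<^sup>2)"
    using terms by (intro set_integral_sum) auto
  moreover have "0 \<le> (\<Sum>i<n. LINT t:circle|lborel. (cmod (g i t - h i t))\<^sup>2)"
    unfolding set_lebesgue_integral_def by (intro sum_nonneg integral_nonneg_AE) auto
  ultimately show "(LINT t:circle|lborel. \<Sum>i<n. (cmod (g i t - h i t))\<^sup>2) = (l2dist n g h)\<^sup>2"
    by (simp add: l2dist_def)
qed

lemma l2dist_eq_0_AE:
  assumes "\<forall>i<n. is_L2 (g i)" "\<forall>i<n. is_L2 (h i)" "l2dist n g h = 0"
  shows "AE t in lborel. t \<in> circle \<longrightarrow> (\<forall>i<n. g i t = h i t)"
proof -
  have "AE t in lborel. indicator circle t * (\<Sum>i<n. (cmod (g i t - h i t))\<^sup>2) = 0"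
  proof (subst integral_nonneg_eq_0_iff_AE[symmetric])
    show "integrable lborel (\<lambda>t. indicator circle t * (\<Sum>i<n. (cmod (g i t - h i t))\<^sup>2))"
      using set_integrable_l2dist_sq[OF assms(1,2)] by (simp add: set_integrable_def)
    show "AE t in lborel. 0 \<le> indicator circle t * (\<Sum>i<n. (cmod (g i t - h i t))\<^sup>2)"
      by (intro AE_I2 mult_nonneg_nonneg sum_nonneg) auto
    show "(LINT t|lborel. indicator circle t * (\<Sum>i<n. (cmod (g i t - h i t))\<^sup>2)) = 0"
      using set_integral_l2dist_sq[OF assms(1,2)] assms(3) by (simp add: set_lebesgue_integral_def)
  qed
  then show ?thesis
    by eventually_elim (auto simp: indicator_def sum_nonneg_eq_0_iff)
qed

lemma ex_point_below_mean:
  fixes S :: "real \<Rightarrow> real"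
  assumes "AE t in lborel. t \<in> circle \<longrightarrow> Q t"
    and S: "set_integrable lborel circle S"
    and mean: "(LINT t:circle|lborel. S t) < 2 * pi * \<delta>"
  shows "\<exists>t\<in>circle. Q t \<and> S t < \<delta>"
proof (rule ccontr)
  assume no_point: "\<not> ?thesis"
  from assms(1) have "AE t in lborel. t \<in> circle \<longrightarrow> \<delta> \<le> S t"
    by eventually_elim (use no_point in \<open>auto simp: not_less\<close>)
  then have "(LINT t:circle|lborel. \<delta>) \<le> (LINT t:circle|lborel. S t)"
    using S by (intro set_integral_mono_AE) (auto simp: set_integrable_def)
  moreover have "(LINT t:circle|lborel. \<delta>) = 2 * pi * \<delta>"
    by (subst set_integral_const) auto
  ultimately show False
    using mean by simp
qed

lemma ex_point_uniformly_close:
  assumes "AE t in lborel. t \<in> circle \<longrightarrow> Q t"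
    and L2: "\<forall>k<l. vec_L2 n (g k) \<and> vec_L2 n (h k)"
    and dist: "\<forall>k<l. l2dist n (g k) (h k) < \<epsilon>"
    and small: "real l * \<epsilon>\<^sup>2 < 2 * pi * \<eta>\<^sup>2" and "\<eta> > 0"
  shows "\<exists>t\<in>circle. Q t \<and> (\<forall>k<l. \<forall>i<n. cmod (g k i t - h k i t) < \<eta>)"
proof -
  define S where "S t = (\<Sum>k<l. \<Sum>i<n. (cmod (g k i t - h k i t))\<^sup>2)" for t
  have L2_entries: "\<forall>i<n. is_L2 (g k i)" "\<forall>i<n. is_L2 (h k i)" if "k < l" for k
    using L2 that by (auto simp: vec_L2_def)
  have "set_integrable lborel circle S"
    unfolding S_def using L2_entries by (intro set_integrable_sum set_integrable_l2dist_sq) auto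
  moreover have "(LINT t:circle|lborel. S t) < 2 * pi * \<eta>\<^sup>2"
  proof -
    have "(LINT t:circle|lborel. S t) =
        (\<Sum>k<l. LINT t:circle|lborel. \<Sum>i<n. (cmod (g k i t - h k i t))\<^sup>2)"
      unfolding S_def using L2_entries by (intro set_integral_sum set_integrable_l2dist_sq) auto
    also have "\<dots> = (\<Sum>k<l. (l2dist n (g k) (h k))\<^sup>2)"
      using L2_entries by (intro sum.cong refl set_integral_l2dist_sq) auto
    also have "\<dots> \<le> (\<Sum>k<l. \<epsilon>\<^sup>2)"
      using dist l2dist_nonneg by (intro sum_mono power_mono) auto
    finally show ?thesis
      using small by simp
  qed
  ultimately obtain t where "t \<in> circle" "Q t" and S_small: "S t < \<eta>\<^sup>2"
    using ex_point_below_mean[OF assms(1)] by blast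
  have "cmod (g k i t - h k i t) < \<eta>" if "k < l" "i < n" for k i
  proof -
    have "(cmod (g k i t - h k i t))\<^sup>2 \<le> (\<Sum>i<n. (cmod (g k i t - h k i t))\<^sup>2)"
      using that by (intro member_le_sum) auto
    also have "\<dots> \<le> S t"
      unfolding S_def using that by (intro member_le_sum sum_nonneg) auto
    finally have "(cmod (g k i t - h k i t))\<^sup>2 < \<eta>\<^sup>2"
      using S_small by simp
    then show ?thesis
      using \<open>\<eta> > 0\<close> power_less_imp_less_base by fastforce
  qed
  with \<open>t \<in> circle\<close> \<open>Q t\<close> show ?thesis
    by blast
qed

lemma set_integral_exp_circle_eq_0:
  assumes "k > (0::nat)"
  shows "(LINT t:circle|lborel. exp (\<i> * of_nat k * of_real t)) = 0"
proof -
  have "set_integrable lborel circle (\<lambda>t. exp (\<i> * of_nat k * of_real t))"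
    by (intro borel_integrable_atLeastAtMost' continuous_intros)
  then have "(LINT t:circle|lborel. exp (\<i> * of_nat k * of_real t)) =
      integral circle (\<lambda>t. exp ((\<i> * of_nat k) * of_real t))"
    by (simp add: set_borel_integral_eq_integral)
  also have "\<dots> = (exp ((\<i> * of_nat k) * of_real (2*pi)) - 1) / (\<i> * of_nat k)"
    using assms by (intro integral_exp) auto
  also have "exp ((\<i> * of_nat k) * of_real (2*pi)) = exp (2 * pi * \<i>) ^ k"
    by (subst exp_of_nat_mult[symmetric]) (simp add: algebra_simps)
  finally show ?thesis
    by simp
qed

lemma is_H2_const: "is_H2 (\<lambda>_. c)"
  using set_integral_exp_circle_eq_0 by (simp add: is_H2_def is_L2_const)

section \<open>Pointwise column spaces of matrix inner functions\<close>

definition mat_column ::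
    "nat \<Rightarrow> (nat \<Rightarrow> nat \<Rightarrow> real \<Rightarrow> complex) \<Rightarrow> nat \<Rightarrow> nat \<Rightarrow> real \<Rightarrow> complex" where
  "mat_column n T j = (\<lambda>i t. if i < n then T i j t else 0)"

definition mat_columns_at ::
    "nat \<Rightarrow> (nat \<Rightarrow> nat \<Rightarrow> real \<Rightarrow> complex) \<Rightarrow> nat \<Rightarrow> real \<Rightarrow> (nat \<Rightarrow> complex) set" where
  "mat_columns_at n T m t = (\<lambda>j i. mat_column n T j i t) ` {..<m}"

lemma finite_mat_columns_at: "finite (mat_columns_at n T m t)"
  by (simp add: mat_columns_at_def)

lemma card_mat_columns_at_le: "card (mat_columns_at n T m t) \<le> m"
  unfolding mat_columns_at_def using card_image_le[of "{..<m}"] by simp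

lemma is_inner_AE_orthonormal_columns:
  assumes "is_inner n m T"
  shows "AE t in lborel. t \<in> circle \<longrightarrow> orthonormal_family n m (\<lambda>j i. mat_column n T j i t)"
  using assms unfolding is_inner_def by (auto simp: orthonormal_family_def mat_column_def)

lemma vec_L2_mat_column:
  assumes "is_inner n m T" "j < m"
  shows "vec_L2 n (mat_column n T j)"
  using assms is_L2_const
  by (auto simp: vec_L2_def mat_column_def is_inner_def is_Hinf_def is_H2_def)

lemma mat_column_in_range_mult:
  assumes "is_inner n m T" "j < m"
  shows "mat_column n T j \<in> range_mult n m T"
proof -
  define e where "e = (\<lambda>j' (t::real). if j' = j then 1 else (0::complex))"
  have "vec_H2 m e"
    using \<open>j < m\<close> by (auto simp: vec_H2_def e_def is_H2_const)
  moreover have "mat_apply n m T e = mat_column n T j"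
    using \<open>j < m\<close>
    by (auto simp: mat_apply_def mat_column_def e_def fun_eq_iff if_distrib cong: if_cong)
  ultimately show ?thesis
    using vec_L2_mat_column[OF assms] unfolding range_mult_def by (auto simp: l2dist_def)
qed

lemma mat_apply_L2:
  assumes "is_inner n m T" "vec_H2 m f" "i < n"
  shows "is_L2 (mat_apply n m T f i)"
proof -
  have "is_L2 (\<lambda>t. \<Sum>j<m. T i j t * f j t)"
    using assms by (intro is_L2_sum is_L2_mult_Hinf)
      (auto simp: is_inner_def vec_H2_def is_H2_def)
  with \<open>i < n\<close> show ?thesis
    by (simp add: mat_apply_def fun_eq_iff)
qed

lemma range_mult_AE_in_span:
  assumes "is_inner n m T" "v \<in> range_mult n m T"
  shows "AE t in lborel. t \<in> circle \<longrightarrow> (\<lambda>i. v i t) \<in> cvec.span (mat_columns_at n T m t)"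
proof -
  obtain f where f: "vec_H2 m f" "l2dist n v (mat_apply n m T f) = 0" and "vec_L2 n v"
    using assms(2) unfolding range_mult_def by auto
  have "AE t in lborel. t \<in> circle \<longrightarrow> (\<forall>i<n. v i t = mat_apply n m T f i t)"
    using \<open>vec_L2 n v\<close> mat_apply_L2[OF assms(1) f(1)]
    by (intro l2dist_eq_0_AE[OF _ _ f(2)]) (auto simp: vec_L2_def)
  then show ?thesis
  proof eventually_elim
    case (elim t)
    show ?case
    proof
      assume "t \<in> circle"
      have "(\<lambda>i. v i t) = (\<Sum>j<m. scale_vec (f j t) (\<lambda>i. mat_column n T j i t))"
      proof
        fix i
        show "v i t = (\<Sum>j<m. scale_vec (f j t) (\<lambda>i. mat_column n T j i t)) i"
          using elim \<open>t \<in> circle\<close> \<open>vec_L2 n v\<close>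
          by (cases "i < n")
            (auto simp: sum_scale_vec_apply mat_apply_def mat_column_def vec_L2_def mult.commute)
      qed
      also have "\<dots> \<in> cvec.span (mat_columns_at n T m t)"
        by (intro cvec.span_sum cvec.span_scale cvec.span_base) (auto simp: mat_columns_at_def)
      finally show "(\<lambda>i. v i t) \<in> cvec.span (mat_columns_at n T m t)" .
    qed
  qed
qed

lemma lin_span_superset: "v \<in> V \<Longrightarrow> v \<in> lin_span V"
  unfolding lin_span_def by (auto intro!: exI[of _ 1] exI[of _ "\<lambda>_. 1"] exI[of _ "\<lambda>_. v"])

lemma l2_closure_superset: "vec_L2 n v \<Longrightarrow> v \<in> S \<Longrightarrow> v \<in> l2_closure n S"
  unfolding l2_closure_def by (auto simp: l2dist_def intro!: bexI[of _ v])

lemma l2_closure_approx_family: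
  assumes "\<forall>k<m. g k \<in> l2_closure n S" "\<epsilon> > 0"
  obtains h where "\<forall>k<m. h k \<in> S" "\<forall>k<m. l2dist n (g k) (h k) < \<epsilon>"
proof -
  have "\<forall>k. \<exists>f. k < m \<longrightarrow> f \<in> S \<and> l2dist n (g k) f < \<epsilon>"
    using assms unfolding l2_closure_def by blast
  with that show ?thesis
    by (metis choice)
qed

lemma lin_span_vec_L2:
  assumes "\<forall>v\<in>V. vec_L2 n v" "h \<in> lin_span V"
  shows "vec_L2 n h"
proof -
  obtain N :: nat and c :: "nat \<Rightarrow> complex" and v
    where "\<forall>k<N. v k \<in> V" and h: "h = (\<lambda>i t. \<Sum>k<N. c k * v k i t)"
    using assms(2) unfolding lin_span_def by blast
  with assms(1) have "\<forall>k<N. vec_L2 n (v k)"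
    by blast
  then show ?thesis
    unfolding h vec_L2_def by (auto intro!: is_L2_sum is_L2_cmult)
qed

lemma lin_span_AE_in_span:
  assumes "\<forall>v\<in>V. AE t in lborel. t \<in> circle \<longrightarrow> (\<lambda>i. v i t) \<in> cvec.span (B t)"
    and "h \<in> lin_span V"
  shows "AE t in lborel. t \<in> circle \<longrightarrow> (\<lambda>i. h i t) \<in> cvec.span (B t)"
proof -
  obtain N :: nat and c :: "nat \<Rightarrow> complex" and v
    where v: "\<forall>k<N. v k \<in> V" and h: "h = (\<lambda>i t. \<Sum>k<N. c k * v k i t)"
    using assms(2) unfolding lin_span_def by blast
  have "AE t in lborel. \<forall>k\<in>{..<N}. t \<in> circle \<longrightarrow> (\<lambda>i. v k i t) \<in> cvec.span (B t)"
    using assms(1) v by (intro AE_finite_allI) auto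
  then show ?thesis
  proof eventually_elim
    case (elim t)
    have "(\<lambda>i. h i t) = (\<Sum>k<N. scale_vec (c k) (\<lambda>i. v k i t))"
      by (simp add: h fun_eq_iff sum_scale_vec_apply)
    with elim show ?case
      by (auto intro!: cvec.span_sum cvec.span_scale)
  qed
qed

lemma lin_span_range_mult_AE_in_span:
  fixes r :: nat
  assumes inner: "\<forall>i<r. is_inner n (ms i) (\<Theta>s i)"
    and "h \<in> lin_span (\<Union>i<r. range_mult n (ms i) (\<Theta>s i))"
  shows "AE t in lborel. t \<in> circle \<longrightarrow>
    (\<lambda>a. h a t) \<in> cvec.span (\<Union>i<r. mat_columns_at n (\<Theta>s i) (ms i) t)"
proof (intro lin_span_AE_in_span[OF _ assms(2)] ballI)
  fix v assume "v \<in> (\<Union>i<r. range_mult n (ms i) (\<Theta>s i))"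
  then obtain i where "i < r" "v \<in> range_mult n (ms i) (\<Theta>s i)"
    by blast
  with inner have "AE t in lborel. t \<in> circle \<longrightarrow>
      (\<lambda>a. v a t) \<in> cvec.span (mat_columns_at n (\<Theta>s i) (ms i) t)"
    by (intro range_mult_AE_in_span) auto
  moreover have "cvec.span (mat_columns_at n (\<Theta>s i) (ms i) t) \<subseteq>
      cvec.span (\<Union>i<r. mat_columns_at n (\<Theta>s i) (ms i) t)" for t
    using \<open>i < r\<close> by (intro cvec.span_mono) blast
  ultimately show "AE t in lborel. t \<in> circle \<longrightarrow>
      (\<lambda>a. v a t) \<in> cvec.span (\<Union>i<r. mat_columns_at n (\<Theta>s i) (ms i) t)"
    by (auto elim!: eventually_mono)
qed

lemma tolerance_sq_less:
  fixes \<eta> :: real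
  assumes "\<eta> > 0"
  shows "real m * (\<eta> / (real m + 1))\<^sup>2 < 2 * pi * \<eta>\<^sup>2"
proof -
  have "real m * (\<eta> / (real m + 1))\<^sup>2 = \<eta>\<^sup>2 * (real m / (real m + 1)\<^sup>2)"
    by (simp add: power_divide)
  also have "\<dots> \<le> \<eta>\<^sup>2"
  proof (rule mult_right_le_one_le)
    have "real m \<le> (real m + 1)\<^sup>2"
      by (simp add: power2_eq_square algebra_simps)
    then show "real m / (real m + 1)\<^sup>2 \<le> 1"
      by (simp add: divide_le_eq)
  qed auto
  also have "\<dots> < 2 * pi * \<eta>\<^sup>2"
    using assms pi_ge_two by (simp add: mult_less_cancel_right1)
  finally show ?thesis .
qed

lemma inner_columns_near_span_card_le:
  fixes B :: "real \<Rightarrow> (nat \<Rightarrow> complex) set"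
  assumes inner: "is_inner n m T"
    and L2: "\<forall>k<m. vec_L2 n (h k)"
    and span: "\<forall>k<m. AE t in lborel. t \<in> circle \<longrightarrow> (\<lambda>i. h k i t) \<in> cvec.span (B t)"
    and finite: "\<And>t. finite (B t)"
    and close: "\<forall>k<m. l2dist n (mat_column n T k) (h k) < 1 / ((real m * real n + 1) * (real m + 1))"
  shows "\<exists>t. m \<le> card (B t)"
proof -
  define \<eta> where "\<eta> = 1 / (real m * real n + 1)"
  define \<epsilon> where "\<epsilon> = \<eta> / (real m + 1)"
  have "\<eta> > 0"
    by (simp add: \<eta>_def add_nonneg_pos)
  have small: "real m * real n * \<eta> < 1"
    by (simp add: \<eta>_def divide_less_eq add_nonneg_pos)
  have "real m * \<epsilon>\<^sup>2 < 2 * pi * \<eta>\<^sup>2"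
    unfolding \<epsilon>_def using \<open>\<eta> > 0\<close> by (rule tolerance_sq_less)
  moreover have "\<forall>k<m. l2dist n (mat_column n T k) (h k) < \<epsilon>"
    using close by (simp add: \<epsilon>_def \<eta>_def)
  moreover have "\<forall>k<m. vec_L2 n (mat_column n T k) \<and> vec_L2 n (h k)"
    using vec_L2_mat_column[OF inner] L2 by blast
  moreover have "AE t in lborel. \<forall>k\<in>{..<m}. t \<in> circle \<longrightarrow> (\<lambda>i. h k i t) \<in> cvec.span (B t)"
    using span by (intro AE_finite_allI) simp_all
  with is_inner_AE_orthonormal_columns[OF inner]
  have "AE t in lborel. t \<in> circle \<longrightarrow>
    (\<forall>k<m. (\<lambda>i. h k i t) \<in> cvec.span (B t)) \<and> orthonormal_family n m (\<lambda>j i. mat_column n T j i t)"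
    by eventually_elim auto
  ultimately have "\<exists>t\<in>circle.
    ((\<forall>k<m. (\<lambda>i. h k i t) \<in> cvec.span (B t)) \<and> orthonormal_family n m (\<lambda>j i. mat_column n T j i t)) \<and>
    (\<forall>k<m. \<forall>i<n. cmod (mat_column n T k i t - h k i t) < \<eta>)"
    by (intro ex_point_uniformly_close[OF _ _ _ _ \<open>\<eta> > 0\<close>])
  then obtain t where span_t: "\<forall>k<m. (\<lambda>i. h k i t) \<in> cvec.span (B t)"
    and orth: "orthonormal_family n m (\<lambda>j i. mat_column n T j i t)"
    and close_t: "\<forall>k<m. \<forall>i<n. cmod (mat_column n T k i t - h k i t) < \<eta>"
    by blast
  have "m \<le> card (B t)"
    using close_t
    by (intro near_orthonormal_card_le[OF orth _ small span_t finite]) (auto intro: less_imp_le)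
  then show ?thesis ..
qed

lemma inner_dim_le_gcd_dim:
  fixes r :: nat
  assumes inner: "\<forall>i<r. is_inner n (ms i) (\<Theta>s i)" "is_inner n l \<Theta>"
    and gcd: "l2_closure n (lin_span (\<Union>i<r. range_mult n (ms i) (\<Theta>s i))) = range_mult n l \<Theta>"
    and "i < r"
  shows "ms i \<le> l"
proof -
  have "mat_column n (\<Theta>s i) j \<in> range_mult n l \<Theta>" if "j < ms i" for j
  proof -
    have "mat_column n (\<Theta>s i) j \<in> range_mult n (ms i) (\<Theta>s i)"
      using mat_column_in_range_mult inner \<open>i < r\<close> that by blast
    with \<open>i < r\<close> show ?thesis
      unfolding gcd[symmetric]
      by (intro l2_closure_superset lin_span_superset) (auto simp: range_mult_def)
  qed
  then have span: "\<forall>j<ms i. AE t in lborel. t \<in> circle \<longrightarrow>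
      (\<lambda>a. mat_column n (\<Theta>s i) j a t) \<in> cvec.span (mat_columns_at n \<Theta> l t)"
    using range_mult_AE_in_span[OF inner(2)] by blast
  have inner_i: "is_inner n (ms i) (\<Theta>s i)"
    using inner(1) \<open>i < r\<close> by blast
  have self_close: "\<forall>j<ms i. l2dist n (mat_column n (\<Theta>s i) j) (mat_column n (\<Theta>s i) j) <
      1 / ((real (ms i) * real n + 1) * (real (ms i) + 1))"
    by (simp add: l2dist_def add_nonneg_pos)
  from inner_columns_near_span_card_le[OF inner_i _ span finite_mat_columns_at self_close]
  obtain t where "ms i \<le> card (mat_columns_at n \<Theta> l t)"
    using vec_L2_mat_column[OF inner_i] by blast
  also have "\<dots> \<le> l"
    by (rule card_mat_columns_at_le)
  finally show ?thesis .
qed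

lemma gcd_dim_le_sum_dims:
  fixes r :: nat
  assumes inner: "\<forall>i<r. is_inner n (ms i) (\<Theta>s i)" "is_inner n l \<Theta>"
    and gcd: "l2_closure n (lin_span (\<Union>i<r. range_mult n (ms i) (\<Theta>s i))) = range_mult n l \<Theta>"
  shows "l \<le> (\<Sum>i<r. ms i)"
proof -
  let ?V = "\<Union>i<r. range_mult n (ms i) (\<Theta>s i)"
  define B where "B t = (\<Union>i<r. mat_columns_at n (\<Theta>s i) (ms i) t)" for t
  have "\<forall>k<l. mat_column n \<Theta> k \<in> l2_closure n (lin_span ?V)"
    using mat_column_in_range_mult[OF inner(2)] gcd by simp
  moreover have "0 < 1 / ((real l * real n + 1) * (real l + 1))"
    by (intro divide_pos_pos mult_pos_pos add_nonneg_pos) auto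
  ultimately obtain h where h_span: "\<forall>k<l. h k \<in> lin_span ?V"
    and h_close: "\<forall>k<l. l2dist n (mat_column n \<Theta> k) (h k) < 1 / ((real l * real n + 1) * (real l + 1))"
    by (rule l2_closure_approx_family)
  have "\<forall>v\<in>?V. vec_L2 n v"
    by (simp add: range_mult_def)
  with h_span have "\<forall>k<l. vec_L2 n (h k)"
    using lin_span_vec_L2 by blast
  moreover have "\<forall>k<l. AE t in lborel. t \<in> circle \<longrightarrow> (\<lambda>a. h k a t) \<in> cvec.span (B t)"
    unfolding B_def using lin_span_range_mult_AE_in_span[OF inner(1)] h_span by blast
  moreover have "finite (B t)" for t
    unfolding B_def by (simp add: finite_mat_columns_at)
  ultimately obtain t where "l \<le> card (B t)"
    using inner_columns_near_span_card_le[OF inner(2) _ _ _ h_close] by blast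
  also have "\<dots> \<le> (\<Sum>i<r. card (mat_columns_at n (\<Theta>s i) (ms i) t))"
    unfolding B_def by (rule card_UN_le) simp
  also have "\<dots> \<le> (\<Sum>i<r. ms i)"
    by (intro sum_mono card_mat_columns_at_le)
  finally show ?thesis .
qed

theorem mainTheorem7:
  fixes r n l :: nat and ms :: "nat \<Rightarrow> nat"
    and \<Theta>s :: "nat \<Rightarrow> nat \<Rightarrow> nat \<Rightarrow> real \<Rightarrow> complex"
    and \<Theta> :: "nat \<Rightarrow> nat \<Rightarrow> real \<Rightarrow> complex"
  assumes "r \<ge> 1"
    and "\<forall>i<r. is_inner n (ms i) (\<Theta>s i)"
    and "is_inner n l \<Theta>"
    and "l2_closure n (lin_span (\<Union>i<r. range_mult n (ms i) (\<Theta>s i))) = range_mult n l \<Theta>"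
  shows "Max (ms ` {..<r}) \<le> l \<and> l \<le> (\<Sum>i<r. ms i)"
proof
  show "Max (ms ` {..<r}) \<le> l"
    using inner_dim_le_gcd_dim[OF assms(2-4)] \<open>r \<ge> 1\<close>
    by (intro Max.boundedI) (auto simp: lessThan_empty_iff bot_nat_def)
  show "l \<le> (\<Sum>i<r. ms i)"
    by (rule gcd_dim_le_sum_dims[OF assms(2-4)])
qed

end
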